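(* Let $\phi:\mathbb{R}^n\to\mathbb{R}$ satisfy Assumption A and let $0<\gamma L_\phi<2$. Then the discrete-time system with input $e\in\mathbb{R}^n$ $$\tilde u^+=\tilde u-\gamma(\nabla\phi(\tilde u)+e)$$ is ISS with respect to $\mathcal{A}_d=\{u^\star\}$.
   Context: Assumption A: $\phi$ is continuously differentiable and there exist $L_\phi>0$, $u^\star\in\mathbb{R}^n$ and class-$\mathcal{K}_\infty$ functions $\mu_1,\mu_2$ such that $\nabla\phi(u)=0$ iff $u=u^\star$, and for all $u,\tilde u\in\mathbb{R}^n$: $\mu_1(\|u-u^\star\|)\le\phi(u)-\phi(u^\star)$, $\mu_2(\phi(u)-\phi(u^\star))\le\|\nabla\phi(u)\|$, and $\|\nabla\phi(u)-\nabla\phi(\tilde u)\|\le L_\phi\|u-\tilde u\|$. ISS: the system $x^+=G_d(x,e)$ is ISS with respect to a compact set $\mathcal{A}_d$ if there exist $\beta\in\mathcal{KL}$, $\alpha\in\mathcal{K}_\infty$ such that for every bounded input sequence $e$ every solution satisfies $|x(j)|_{\mathcal{A}_d}\le\beta(|x(0)|_{\mathcal{A}_d},j)+\alpha(\sup_k\|e(k)\|)$ for all $j\in\mathbb{N}$. *)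

theory Defs
  imports "HOL-Analysis.Analysis"
begin

definition class_K :: "(real \<Rightarrow> real) \<Rightarrow> bool" where
  "class_K \<alpha> \<longleftrightarrow> continuous_on {0..} \<alpha> \<and> \<alpha> 0 = 0 \<and> strict_mono_on {0..} \<alpha>"

definition class_Kinf :: "(real \<Rightarrow> real) \<Rightarrow> bool" where
  "class_Kinf \<alpha> \<longleftrightarrow> class_K \<alpha> \<and> filterlim \<alpha> at_top at_top"

definition class_KL :: "(real \<Rightarrow> real \<Rightarrow> real) \<Rightarrow> bool" where
  "class_KL \<beta> \<longleftrightarrow>
     (\<forall>t\<ge>0. class_K (\<lambda>s. \<beta> s t)) \<and>
     (\<forall>s\<ge>0. antimono_on {0..} (\<beta> s) \<and> ((\<beta> s) \<longlongrightarrow> 0) at_top)"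

definition ISS_discrete :: "('a::real_normed_vector \<Rightarrow> 'b::real_normed_vector \<Rightarrow> 'a) \<Rightarrow> 'a set \<Rightarrow> bool" where
  "ISS_discrete G A \<longleftrightarrow>
     (\<exists>\<beta> \<alpha>. class_KL \<beta> \<and> class_Kinf \<alpha> \<and>
       (\<forall>e x. bounded (range e) \<longrightarrow> (\<forall>j. x (Suc j) = G (x j) (e j)) \<longrightarrow>
          (\<forall>j. infdist (x j) A \<le> \<beta> (infdist (x 0) A) (real j) + \<alpha> (SUP k. norm (e k)))))"

definition assumption_A ::
  "(real^'n \<Rightarrow> real) \<Rightarrow> (real^'n \<Rightarrow> real^'n) \<Rightarrow> real \<Rightarrow> real^'n \<Rightarrow> bool" where
  "assumption_A phi grad L ustar \<longleftrightarrow>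
     (\<forall>u. GDERIV phi u :> grad u) \<and> continuous_on UNIV grad \<and> L > 0 \<and>
     (\<forall>u. grad u = 0 \<longleftrightarrow> u = ustar) \<and>
     (\<exists>\<mu>1 \<mu>2. class_Kinf \<mu>1 \<and> class_Kinf \<mu>2 \<and>
        (\<forall>u. \<mu>1 (norm (u - ustar)) \<le> phi u - phi ustar) \<and>
        (\<forall>u. \<mu>2 (phi u - phi ustar) \<le> norm (grad u))) \<and>
     (\<forall>u v. norm (grad u - grad v) \<le> L * norm (u - v))"

end

theory Submission
  imports Defs
begin

(* V u = phi u - phi u* is an ISS-Lyapunov function for the perturbed gradient step. The quadratic
   upper bound coming from the L-Lipschitz gradient, together with Young's inequality, gives
   V u\<^sup>+ \<le> V u - c \<parallel>\<nabla>phi u\<parallel>\<^sup>2 + K \<parallel>e\<parallel>\<^sup>2 with c > 0 precisely because \<gamma> L < 2, and \<parallel>\<nabla>phi u\<parallel> \<ge> \<mu>2 (V u) turns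
   this into V u\<^sup>+ \<le> V u - \<rho> (V u) + \<sigma> \<parallel>e\<parallel>. For inputs bounded by w, a class-K contraction F with
   F v \<ge> v - \<rho> v / 2 dominates the decrease as long as \<rho> (V u) \<ge> 2 \<sigma> w, whence
   V (u j) \<le> max (F\<^sup>j (V (u 0))) (\<rho>\<inverse> (2 \<sigma> w) + \<sigma> w); the iterates of F provide the KL function. *)

lemma class_K_less: "class_K f \<Longrightarrow> 0 \<le> x \<Longrightarrow> x < y \<Longrightarrow> f x < f y"
  unfolding class_K_def by (auto intro: strict_mono_onD)

lemma class_K_le: "class_K f \<Longrightarrow> 0 \<le> x \<Longrightarrow> x \<le> y \<Longrightarrow> f x \<le> f y"
  using class_K_less[of f x y] by (cases "x = y") auto

lemma class_K_nonneg: "class_K f \<Longrightarrow> 0 \<le> x \<Longrightarrow> 0 \<le> f x"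
  using class_K_le[of f 0 x] unfolding class_K_def by auto

lemma class_K_pos: "class_K f \<Longrightarrow> 0 < x \<Longrightarrow> 0 < f x"
  using class_K_less[of f 0 x] unfolding class_K_def by auto

lemma class_K_comp:
  assumes f: "class_K f" and g: "class_K g"
  shows "class_K (\<lambda>x. f (g x))"
proof -
  have "g ` {0..} \<subseteq> {0..}" using class_K_nonneg[OF g] by auto
  then have "continuous_on {0..} (\<lambda>x. f (g x))"
    using f g unfolding class_K_def by (intro continuous_on_compose2[of "{0..}" f "{0..}" g]) auto
  moreover have "strict_mono_on {0..} (\<lambda>x. f (g x))"
    by (rule strict_mono_onI) (auto intro!: class_K_less[OF f] class_K_less[OF g] class_K_nonneg[OF g])
  ultimately show ?thesis using f g by (simp add: class_K_def)
qed

lemma class_Kinf_comp: "class_Kinf f \<Longrightarrow> class_Kinf g \<Longrightarrow> class_Kinf (\<lambda>x. f (g x))"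
  unfolding class_Kinf_def by (auto intro: class_K_comp filterlim_compose)

lemma class_Kinf_add:
  assumes "class_Kinf f" "class_Kinf g"
  shows "class_Kinf (\<lambda>x. f x + g x)"
proof -
  have f: "class_K f" and g: "class_K g" using assms by (auto simp: class_Kinf_def)
  have "continuous_on {0..} (\<lambda>x. f x + g x)"
    using f g unfolding class_K_def by (intro continuous_intros) auto
  moreover have "strict_mono_on {0..} (\<lambda>x. f x + g x)"
    by (rule strict_mono_onI) (auto intro!: add_strict_mono class_K_less[OF f] class_K_less[OF g])
  moreover have "filterlim (\<lambda>x. f x + g x) at_top at_top"
    using assms unfolding class_Kinf_def by (auto intro: filterlim_at_top_add_at_top)
  ultimately show ?thesis using f g by (simp add: class_Kinf_def class_K_def)
qed

lemma class_Kinf_scale: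
  assumes "class_Kinf f" "c > 0"
  shows "class_Kinf (\<lambda>x. c * f x)"
proof -
  have f: "class_K f" using assms by (auto simp: class_Kinf_def)
  have "continuous_on {0..} (\<lambda>x. c * f x)"
    using f unfolding class_K_def by (intro continuous_intros) auto
  moreover have "strict_mono_on {0..} (\<lambda>x. c * f x)"
    by (rule strict_mono_onI) (auto intro!: class_K_less[OF f] simp: assms)
  moreover have "filterlim (\<lambda>x. c * f x) at_top at_top"
    using assms unfolding class_Kinf_def
    by (auto intro!: filterlim_tendsto_pos_mult_at_top[OF tendsto_const])
  ultimately show ?thesis using f by (simp add: class_Kinf_def class_K_def)
qed

lemma class_Kinf_power2: "class_Kinf (\<lambda>x::real. x\<^sup>2)"
proof -
  have "strict_mono_on {0..} (\<lambda>x::real. x\<^sup>2)"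
    by (rule strict_mono_onI) (auto intro!: power_strict_mono)
  moreover have "filterlim (\<lambda>x::real. x\<^sup>2) at_top at_top"
    by (intro filterlim_pow_at_top filterlim_ident) auto
  ultimately show ?thesis by (simp add: class_Kinf_def class_K_def continuous_intros)
qed

lemma class_K_max_le_add:
  assumes "class_K f" "0 \<le> a" "0 \<le> b"
  shows "f (max a b) \<le> f a + f b"
  using class_K_nonneg[OF assms(1,2)] class_K_nonneg[OF assms(1,3)] by (simp add: max_def)

lemma class_Kinf_surj:
  assumes "class_Kinf \<mu>" "y \<ge> 0"
  shows "\<exists>x\<ge>0. \<mu> x = y"
proof -
  have K: "class_K \<mu>" and "filterlim \<mu> at_top at_top" using assms by (auto simp: class_Kinf_def)
  then obtain X where X: "\<And>x. x \<ge> X \<Longrightarrow> y \<le> \<mu> x"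
    by (auto simp: filterlim_at_top eventually_at_top_linorder)
  have "\<exists>x\<ge>0. x \<le> max X 0 \<and> \<mu> x = y"
    using assms(2) X[of "max X 0"] K unfolding class_K_def
    by (intro IVT') (auto intro: continuous_on_subset)
  then show ?thesis by auto
qed

\<comment> \<open>Extending \<open>\<mu>\<close> by the identity on the negative reals gives an increasing homeomorphism \<open>m\<close>
  of \<open>\<real>\<close>; \<open>\<nu>\<close> is its inverse.\<close>
lemma class_Kinf_inverse:
  assumes "class_Kinf \<mu>"
  obtains \<nu> where "class_Kinf \<nu>" "\<And>x. x \<ge> 0 \<Longrightarrow> \<nu> (\<mu> x) = x"
    "\<And>y. y \<ge> 0 \<Longrightarrow> \<mu> (\<nu> y) = y" "\<And>y. y \<ge> 0 \<Longrightarrow> \<nu> y \<ge> 0"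
proof -
  have K: "class_K \<mu>" using assms by (simp add: class_Kinf_def)
  have \<mu>_cont: "continuous_on {0..} \<mu>" and \<mu>_0: "\<mu> 0 = 0" using K by (auto simp: class_K_def)
  define m where "m x = (if x \<le> 0 then x else \<mu> x)" for x
  have m_\<mu>: "m x = \<mu> x" if "x \<ge> 0" for x using that \<mu>_0 by (simp add: m_def)
  have "continuous_on UNIV m"
    unfolding m_def
    by (rule continuous_on_cases_le) (auto intro: continuous_on_subset[OF \<mu>_cont] continuous_intros simp: \<mu>_0)
  then have m_cont: "isCont m x" for x by (simp add: continuous_on_eq_continuous_at)
  have m_mono: "strict_mono m"
  proof (rule strict_monoI)
    fix x y :: real assume "x < y"
    then show "m x < m y"
      using class_K_less[OF K, of x y] class_K_pos[OF K, of y] by (auto simp: m_def)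
  qed
  have "surj m"
  proof (rule surjI)
    fix y :: real
    show "m (if y \<le> 0 then y else SOME x. x \<ge> 0 \<and> \<mu> x = y) = y"
      using someI_ex[OF class_Kinf_surj[OF assms, of y]] m_\<mu> \<mu>_0 by (auto simp: m_def)
  qed
  define \<nu> where "\<nu> = inv m"
  have \<nu>_m: "\<nu> (m x) = x" for x
    unfolding \<nu>_def by (rule inv_f_f[OF strict_mono_imp_inj_on[OF m_mono]])
  have m_\<nu>: "m (\<nu> y) = y" for y unfolding \<nu>_def by (rule surj_f_inv_f[OF \<open>surj m\<close>])
  have \<nu>_le_iff: "\<nu> x \<le> \<nu> y \<longleftrightarrow> x \<le> y" for x y
    using strict_mono_less_eq[OF m_mono, of "\<nu> x" "\<nu> y"] by (simp add: m_\<nu>)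
  have \<nu>_0: "\<nu> 0 = 0" using \<nu>_m[of 0] by (simp add: m_def)
  have \<nu>_nonneg: "\<nu> y \<ge> 0" if "y \<ge> 0" for y using \<nu>_le_iff[of 0 y] that by (simp add: \<nu>_0)
  have "isCont \<nu> y" for y
    using isCont_inverse_function2[of "\<nu> y - 1" "\<nu> y" "\<nu> y + 1" \<nu> m] by (simp add: \<nu>_m m_\<nu> m_cont)
  then have "continuous_on {0..} \<nu>" by (simp add: continuous_at_imp_continuous_on)
  moreover have "strict_mono_on {0..} \<nu>"
    by (rule strict_mono_onI) (meson \<nu>_le_iff not_le)
  moreover have "filterlim \<nu> at_top at_top"
    unfolding filterlim_at_top
    using \<nu>_le_iff[of "m Z" for Z] by (auto simp: \<nu>_m intro: eventually_mono[OF eventually_ge_at_top])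
  ultimately have "class_Kinf \<nu>" by (simp add: class_Kinf_def class_K_def \<nu>_0)
  moreover have "\<nu> (\<mu> x) = x" if "x \<ge> 0" for x using \<nu>_m[of x] m_\<mu>[OF that] by simp
  moreover have "\<mu> (\<nu> y) = y" if "y \<ge> 0" for y using m_\<nu>[of y] m_\<mu>[OF \<nu>_nonneg[OF that]] by simp
  ultimately show thesis using \<nu>_nonneg by (rule that)
qed

lemma class_K_id: "class_K (\<lambda>x. x)"
  by (simp add: class_K_def strict_mono_onI)

lemma class_K_funpow: "class_K F \<Longrightarrow> class_K (F ^^ n)"
  by (induction n) (simp_all add: class_K_id[unfolded id_def[symmetric]] class_K_comp comp_def)

lemma class_K_le_self:
  assumes "class_K F" "\<And>v. v > 0 \<Longrightarrow> F v < v" "v \<ge> 0"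
  shows "F v \<le> v"
proof (cases "v = 0")
  case False
  then show ?thesis using assms(2)[of v] assms(3) by simp
qed (use assms(1) in \<open>simp add: class_K_def\<close>)

lemma funpow_antimono:
  assumes F: "class_K F" and contr: "\<And>v. v > 0 \<Longrightarrow> F v < v" and "s \<ge> 0" "n \<le> m"
  shows "(F ^^ m) s \<le> (F ^^ n) s"
  using \<open>n \<le> m\<close>
proof (induction m rule: dec_induct)
  case (step k)
  have "(F ^^ k) s \<ge> 0" using class_K_nonneg[OF class_K_funpow[OF F] \<open>s \<ge> 0\<close>] .
  then have "F ((F ^^ k) s) \<le> (F ^^ k) s" using class_K_le_self[OF F contr] by blast
  then show ?case using step.IH by simp
qed simp

lemma funpow_tendsto_zero:
  assumes F: "class_K F" and contr: "\<And>v. v > 0 \<Longrightarrow> F v < v" and s: "s \<ge> 0"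
  shows "(\<lambda>n. (F ^^ n) s) \<longlonglongrightarrow> 0"
proof -
  have nonneg: "(F ^^ n) s \<ge> 0" for n using class_K_nonneg[OF class_K_funpow[OF F] s] .
  have "decseq (\<lambda>n. (F ^^ n) s)"
    using funpow_antimono[OF F contr s] by (simp add: decseq_def)
  then obtain l where l: "(\<lambda>n. (F ^^ n) s) \<longlonglongrightarrow> l"
    using decseq_convergent[of "\<lambda>n. (F ^^ n) s" 0] nonneg by blast
  have l_nonneg: "l \<ge> 0" using l nonneg by (intro LIMSEQ_le_const) auto
  have "(\<lambda>n. F ((F ^^ n) s)) \<longlonglongrightarrow> F l"
    using F l nonneg l_nonneg unfolding class_K_def
    by (intro continuous_on_tendsto_compose[of "{0..}" F]) auto
  moreover have "(\<lambda>n. F ((F ^^ n) s)) \<longlonglongrightarrow> l"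
    using LIMSEQ_Suc[OF l] by simp
  ultimately have "F l = l" using LIMSEQ_unique by blast
  then have "l = 0" using contr[of l] l_nonneg by fastforce
  then show ?thesis using l by simp
qed

lemma class_KL_funpow:
  assumes F: "class_K F" and contr: "\<And>v. v > 0 \<Longrightarrow> F v < v"
  shows "class_KL (\<lambda>s t. (F ^^ nat \<lfloor>t\<rfloor>) s)"
  unfolding class_KL_def
proof (intro conjI allI impI)
  fix s :: real assume s: "s \<ge> 0"
  show "antimono_on {0..} (\<lambda>t. (F ^^ nat \<lfloor>t\<rfloor>) s)"
    by (rule monotone_onI) (auto intro!: funpow_antimono[OF F contr s] nat_mono floor_mono)
  show "((\<lambda>t. (F ^^ nat \<lfloor>t\<rfloor>) s) \<longlongrightarrow> 0) at_top"
    using filterlim_compose[OF funpow_tendsto_zero[OF F contr s]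
        filterlim_compose[OF filterlim_nat_sequentially filterlim_floor_sequentially]]
    by simp
qed (rule class_K_funpow[OF F])

lemma class_KL_comp:
  assumes f: "class_K f" and \<beta>: "class_KL \<beta>" and g: "class_K g"
  shows "class_KL (\<lambda>s t. f (\<beta> (g s) t))"
  unfolding class_KL_def
proof (intro conjI allI impI)
  fix t :: real assume "t \<ge> 0"
  then show "class_K (\<lambda>s. f (\<beta> (g s) t))"
    using \<beta> by (intro class_K_comp[OF f] class_K_comp[OF _ g]) (simp add: class_KL_def)
next
  fix s :: real assume "s \<ge> 0"
  then have gs: "g s \<ge> 0" by (rule class_K_nonneg[OF g])
  have \<beta>_nonneg: "\<beta> (g s) t \<ge> 0" if "t \<ge> 0" for t
    using \<beta> that gs by (auto simp: class_KL_def intro: class_K_nonneg)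
  have anti: "antimono_on {0..} (\<beta> (g s))" and lim: "(\<beta> (g s) \<longlongrightarrow> 0) at_top"
    using \<beta> gs by (auto simp: class_KL_def)
  show "antimono_on {0..} (\<lambda>t. f (\<beta> (g s) t))"
    by (rule monotone_onI) (auto intro!: class_K_le[OF f] \<beta>_nonneg monotone_onD[OF anti])
  have "((\<lambda>t. f (\<beta> (g s) t)) \<longlongrightarrow> f 0) at_top"
    using f \<beta>_nonneg unfolding class_K_def
    by (intro continuous_on_tendsto_compose[OF _ lim]) (auto intro: eventually_mono[OF eventually_ge_at_top[of 0]])
  then show "((\<lambda>t. f (\<beta> (g s) t)) \<longlongrightarrow> 0) at_top"
    using f by (simp add: class_K_def)
qed

\<comment> \<open>The infimal convolution of \<open>min (\<rho> w) w\<close> (on \<open>w \<ge> 0\<close>) with \<open>\<bar>\<cdot>\<bar>\<close>.\<close>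
lemma class_K_Lipschitz_minorant:
  assumes \<rho>: "class_K \<rho>"
  obtains r where "\<And>v v'. r v \<le> r v' + \<bar>v - v'\<bar>" "\<And>v. r v \<ge> 0" "\<And>v. v > 0 \<Longrightarrow> r v > 0"
    "\<And>v. v \<ge> 0 \<Longrightarrow> r v \<le> min (\<rho> v) v"
proof -
  define q where "q w = min (\<rho> w) w" for w
  have q_nonneg: "q w \<ge> 0" if "w \<ge> 0" for w using class_K_nonneg[OF \<rho> that] that by (simp add: q_def)
  have q_mono: "q w \<le> q w'" if "0 \<le> w" "w \<le> w'" for w w'
    using class_K_le[OF \<rho> that] that by (auto simp: q_def)
  have q_pos: "q w > 0" if "w > 0" for w using class_K_pos[OF \<rho> that] that by (simp add: q_def)
  define r where "r v = Inf ((\<lambda>w. q w + \<bar>v - w\<bar>) ` {0..})" for v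
  have bdd: "bdd_below ((\<lambda>w. q w + \<bar>v - w\<bar>) ` {0..})" for v
    by (rule bdd_belowI[of _ 0]) (auto intro: add_nonneg_nonneg q_nonneg)
  have r_le: "r v \<le> q w + \<bar>v - w\<bar>" if "w \<ge> 0" for v w
    unfolding r_def by (rule cInf_lower[OF _ bdd]) (use that in auto)
  have r_ge: "c \<le> r v" if "\<And>w. w \<ge> 0 \<Longrightarrow> c \<le> q w + \<bar>v - w\<bar>" for c v
    unfolding r_def using that by (intro cInf_greatest) auto
  have "r v \<le> r v' + \<bar>v - v'\<bar>" for v v'
  proof -
    have "r v - \<bar>v - v'\<bar> \<le> r v'"
    proof (rule r_ge)
      fix w :: real assume "w \<ge> 0"
      then have "r v \<le> q w + \<bar>v - w\<bar>" by (rule r_le)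
      then show "r v - \<bar>v - v'\<bar> \<le> q w + \<bar>v' - w\<bar>" by linarith
    qed
    then show ?thesis by simp
  qed
  moreover have "r v \<ge> 0" for v by (rule r_ge) (auto intro: add_nonneg_nonneg q_nonneg)
  moreover have "r v > 0" if "v > 0" for v
  proof -
    have "min (q (v/2)) (v/2) \<le> q w + \<bar>v - w\<bar>" if "w \<ge> 0" for w
      using q_mono[of "v/2" w] q_nonneg[OF that] \<open>v > 0\<close> by (cases "w \<ge> v/2") auto
    then have "min (q (v/2)) (v/2) \<le> r v" by (rule r_ge)
    moreover have "min (q (v/2)) (v/2) > 0" using q_pos[of "v/2"] that by auto
    ultimately show ?thesis by linarith
  qed
  moreover have "r v \<le> min (\<rho> v) v" if "v \<ge> 0" for v using r_le[OF that, of v] by (simp add: q_def)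
  ultimately show thesis by (rule that)
qed

lemma class_K_contraction_above:
  assumes \<rho>: "class_K \<rho>"
  obtains F where "class_K F" "\<And>v. v > 0 \<Longrightarrow> F v < v" "\<And>v. v \<ge> 0 \<Longrightarrow> v - \<rho> v / 2 \<le> F v"
proof -
  obtain r where r_lipschitz: "\<And>v v'. r v \<le> r v' + \<bar>v - v'\<bar>" and r_nonneg: "\<And>v. r v \<ge> 0"
    and r_pos: "\<And>v. v > 0 \<Longrightarrow> r v > 0" and r_le: "\<And>v. v \<ge> 0 \<Longrightarrow> r v \<le> min (\<rho> v) v"
    using class_K_Lipschitz_minorant[OF \<rho>] by metis
  define F where "F v = v - r v / 2" for v
  have "(3/2)-lipschitz_on UNIV F"
  proof (rule lipschitz_onI)
    fix x y :: real
    show "dist (F x) (F y) \<le> 3/2 * dist x y"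
      using r_lipschitz[of x y] r_lipschitz[of y x]
      by (auto simp: F_def dist_real_def abs_if split: if_splits)
  qed simp
  then have "continuous_on {0..} F" by (auto intro: lipschitz_on_continuous_on continuous_on_subset)
  moreover have "F 0 = 0" using r_le[of 0] r_nonneg[of 0] by (simp add: F_def)
  moreover have "strict_mono_on {0..} F"
  proof (rule strict_mono_onI)
    fix v v' :: real assume "v < v'"
    then show "F v < F v'" using r_lipschitz[of v' v] by (simp add: F_def)
  qed
  ultimately have "class_K F" by (simp add: class_K_def)
  moreover have "F v < v" if "v > 0" for v using r_pos[OF that] by (simp add: F_def)
  moreover have "v - \<rho> v / 2 \<le> F v" if "v \<ge> 0" for v using r_le[OF that] by (simp add: F_def)
  ultimately show thesis by (rule that)
qed

lemma Lyapunov_comparison: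
  assumes \<rho>: "class_K \<rho>" and F: "class_K F" and contr: "\<And>v. v > 0 \<Longrightarrow> F v < v"
    and above: "\<And>v. v \<ge> 0 \<Longrightarrow> v - \<rho> v / 2 \<le> F v"
    and T: "T \<ge> 0" "\<rho> T = 2 * d" and d: "d \<ge> 0"
    and v_nonneg: "\<And>j. 0 \<le> v j" and step: "\<And>j. v (Suc j) \<le> v j - \<rho> (v j) + d"
  shows "v j \<le> max ((F ^^ j) (v 0)) (T + d)"
proof (induction j)
  case (Suc j)
  show ?case
  proof (cases "\<rho> (v j) \<ge> 2 * d")
    case True
    then have "v (Suc j) \<le> v j - \<rho> (v j) / 2" using step[of j] by linarith
    also have "\<dots> \<le> F (v j)" using above v_nonneg by blast
    also have "\<dots> \<le> F (max ((F ^^ j) (v 0)) (T + d))"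
      using Suc v_nonneg by (intro class_K_le[OF F]) auto
    also have "\<dots> \<le> max ((F ^^ Suc j) (v 0)) (T + d)"
      using class_K_le_self[OF F contr, of "T + d"] T d by (auto simp: max_def)
    finally show ?thesis .
  next
    case False
    then have "v j < T" using class_K_le[OF \<rho>, of T "v j"] T by force
    then show ?thesis using step[of j] class_K_nonneg[OF \<rho> v_nonneg[of j]] by auto
  qed
qed simp

lemma Lyapunov_trajectory_estimate:
  fixes G :: "'a::real_normed_vector \<Rightarrow> 'b::real_normed_vector \<Rightarrow> 'a" and V :: "'a \<Rightarrow> real"
  assumes \<mu>1: "class_K \<mu>1" and \<mu>2: "class_K \<mu>2" and \<rho>: "class_K \<rho>" and \<sigma>: "class_K \<sigma>"
    and lower: "\<And>x. \<mu>1 (infdist x A) \<le> V x" and upper: "\<And>x. V x \<le> \<mu>2 (infdist x A)"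
    and decrease: "\<And>x e. V (G x e) \<le> V x - \<rho> (V x) + \<sigma> (norm e)"
    and \<iota>: "class_K \<iota>" "\<And>x. x \<ge> 0 \<Longrightarrow> \<iota> (\<mu>1 x) = x"
    and F: "class_K F" and contr: "\<And>v. v > 0 \<Longrightarrow> F v < v"
    and above: "\<And>v. v \<ge> 0 \<Longrightarrow> v - \<rho> v / 2 \<le> F v"
    and T: "T \<ge> 0" "\<rho> T = 2 * \<sigma> w"
    and trajectory: "\<And>j. x (Suc j) = G (x j) (e j)" and e_le: "\<And>k. norm (e k) \<le> w"
  shows "infdist (x j) A \<le> \<iota> ((F ^^ j) (\<mu>2 (infdist (x 0) A))) + \<iota> (T + \<sigma> w)"
proof -
  have \<sigma>w_nonneg: "\<sigma> w \<ge> 0" by (rule class_K_nonneg[OF \<sigma> order_trans[OF norm_ge_zero e_le]])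
  have V_nonneg: "V y \<ge> 0" for y
    using class_K_nonneg[OF \<mu>1 infdist_nonneg] lower[of y] by (rule order_trans)
  have "V (x (Suc j)) \<le> V (x j) - \<rho> (V (x j)) + \<sigma> w" for j
    using decrease[of "x j" "e j"] class_K_le[OF \<sigma> norm_ge_zero e_le[of j]] trajectory[of j] by simp
  then have "V (x j) \<le> max ((F ^^ j) (V (x 0))) (T + \<sigma> w)"
    using \<sigma>w_nonneg V_nonneg by (intro Lyapunov_comparison[OF \<rho> F contr above T])
  also have "\<dots> \<le> max ((F ^^ j) (\<mu>2 (infdist (x 0) A))) (T + \<sigma> w)"
    using upper V_nonneg by (intro max.mono class_K_le[OF class_K_funpow[OF F]]) auto
  finally have V_le: "V (x j) \<le> max ((F ^^ j) (\<mu>2 (infdist (x 0) A))) (T + \<sigma> w)" .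
  have "infdist (x j) A = \<iota> (\<mu>1 (infdist (x j) A))" by (simp add: \<iota>(2) infdist_nonneg)
  also have "\<dots> \<le> \<iota> (max ((F ^^ j) (\<mu>2 (infdist (x 0) A))) (T + \<sigma> w))"
    by (intro class_K_le[OF \<iota>(1)] order_trans[OF lower V_le] class_K_nonneg[OF \<mu>1] infdist_nonneg)
  also have "\<dots> \<le> \<iota> ((F ^^ j) (\<mu>2 (infdist (x 0) A))) + \<iota> (T + \<sigma> w)"
    using class_K_nonneg[OF class_K_funpow[OF F] class_K_nonneg[OF \<mu>2 infdist_nonneg]] T \<sigma>w_nonneg
    by (intro class_K_max_le_add[OF \<iota>(1)]) auto
  finally show ?thesis .
qed

lemma ISS_discrete_if_Lyapunov:
  fixes G :: "'a::real_normed_vector \<Rightarrow> 'b::real_normed_vector \<Rightarrow> 'a" and V :: "'a \<Rightarrow> real"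
  assumes \<mu>1: "class_Kinf \<mu>1" and \<mu>2: "class_K \<mu>2" and \<rho>: "class_Kinf \<rho>" and \<sigma>: "class_Kinf \<sigma>"
    and lower: "\<And>x. \<mu>1 (infdist x A) \<le> V x" and upper: "\<And>x. V x \<le> \<mu>2 (infdist x A)"
    and decrease: "\<And>x e. V (G x e) \<le> V x - \<rho> (V x) + \<sigma> (norm e)"
  shows "ISS_discrete G A"
proof -
  have \<mu>1K: "class_K \<mu>1" and \<rho>K: "class_K \<rho>" and \<sigma>K: "class_K \<sigma>"
    using \<mu>1 \<rho> \<sigma> by (simp_all add: class_Kinf_def)
  obtain \<iota> where \<iota>: "class_Kinf \<iota>" and \<iota>_\<mu>1: "\<And>x. x \<ge> 0 \<Longrightarrow> \<iota> (\<mu>1 x) = x"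
    using class_Kinf_inverse[OF \<mu>1] by metis
  then have \<iota>K: "class_K \<iota>" by (simp add: class_Kinf_def)
  obtain \<nu> where \<nu>: "class_Kinf \<nu>" and \<rho>_\<nu>: "\<And>y. y \<ge> 0 \<Longrightarrow> \<rho> (\<nu> y) = y"
    and \<nu>_nonneg: "\<And>y. y \<ge> 0 \<Longrightarrow> \<nu> y \<ge> 0"
    using class_Kinf_inverse[OF \<rho>] by metis
  obtain F where F: "class_K F" and contr: "\<And>v. v > 0 \<Longrightarrow> F v < v"
    and above: "\<And>v. v \<ge> 0 \<Longrightarrow> v - \<rho> v / 2 \<le> F v"
    using class_K_contraction_above[OF \<rho>K] by metis
  define \<beta> where "\<beta> s t = \<iota> ((F ^^ nat \<lfloor>t\<rfloor>) (\<mu>2 s))" for s t :: real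
  define \<alpha> where "\<alpha> w = \<iota> (\<nu> (2 * \<sigma> w) + \<sigma> w)" for w :: real
  have "class_KL \<beta>"
    unfolding \<beta>_def using class_KL_comp[OF \<iota>K class_KL_funpow[OF F contr] \<mu>2] by simp
  moreover have "class_Kinf (\<lambda>w. \<nu> (2 * \<sigma> w))" by (rule class_Kinf_comp[OF \<nu> class_Kinf_scale[OF \<sigma>]]) simp
  then have "class_Kinf \<alpha>" unfolding \<alpha>_def by (intro class_Kinf_comp[OF \<iota>] class_Kinf_add \<sigma>)
  moreover have "infdist (x j) A \<le> \<beta> (infdist (x 0) A) (real j) + \<alpha> (SUP k. norm (e k))"
    if "bounded (range e)" and "\<forall>j. x (Suc j) = G (x j) (e j)" for e x j
  proof -
    have "bdd_above (range (\<lambda>k. norm (e k)))"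
      using \<open>bounded (range e)\<close> unfolding bounded_iff bdd_above_def by (auto intro!: exI)
    then have e_le: "norm (e k) \<le> (SUP k. norm (e k))" for k by (rule cSUP_upper[OF UNIV_I])
    then have "\<sigma> (SUP k. norm (e k)) \<ge> 0" using class_K_nonneg[OF \<sigma>K] order_trans[OF norm_ge_zero] by blast
    then show ?thesis
      unfolding \<beta>_def \<alpha>_def floor_of_nat nat_int using \<rho>_\<nu> \<nu>_nonneg \<open>\<forall>j. x (Suc j) = G (x j) (e j)\<close>
      by (intro Lyapunov_trajectory_estimate[OF \<mu>1K \<mu>2 \<rho>K \<sigma>K lower upper decrease \<iota>K \<iota>_\<mu>1 F contr above
          _ _ _ e_le]) auto
  qed
  ultimately show ?thesis unfolding ISS_discrete_def by blast
qed

lemma lipschitz_gradient_quadratic_bound: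
  fixes phi :: "'a::real_inner \<Rightarrow> real"
  assumes grad: "\<And>u. GDERIV phi u :> grad u"
    and lip: "\<And>u v. norm (grad u - grad v) \<le> L * norm (u - v)"
  shows "phi v \<le> phi u + inner (grad u) (v - u) + L / 2 * (norm (v - u))\<^sup>2"
proof -
  define d where "d = v - u"
  define k where "k t = phi (u + t *\<^sub>R d) - t * inner (grad u) d - L / 2 * t\<^sup>2 * (norm d)\<^sup>2" for t
  have phi_deriv: "((\<lambda>t. phi (u + t *\<^sub>R d)) has_real_derivative inner d (grad (u + t *\<^sub>R d))) (at t)" for t
  proof -
    have "((\<lambda>t. u + t *\<^sub>R d) has_derivative (\<lambda>h. h *\<^sub>R d)) (at t)"
      by (auto intro!: derivative_eq_intros)
    moreover have "(phi has_derivative (\<lambda>h. inner h (grad (u + t *\<^sub>R d)))) (at (u + t *\<^sub>R d))"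
      using grad by (simp add: gderiv_def)
    ultimately
    have "((\<lambda>t. phi (u + t *\<^sub>R d)) has_derivative (\<lambda>h. inner (h *\<^sub>R d) (grad (u + t *\<^sub>R d)))) (at t)"
      by (rule has_derivative_compose)
    then show ?thesis by (simp add: has_field_derivative_def mult_commute_abs)
  qed
  have k_deriv: "(k has_real_derivative
      inner d (grad (u + t *\<^sub>R d)) - inner (grad u) d - L * t * (norm d)\<^sup>2) (at t)" for t
    unfolding k_def by (rule derivative_eq_intros phi_deriv refl | simp)+
  have "k 1 \<le> k 0"
  proof (rule DERIV_nonpos_imp_nonincreasing[of 0 1 k])
    fix t :: real assume t: "0 \<le> t" "t \<le> 1"
    have "inner d (grad (u + t *\<^sub>R d)) - inner (grad u) d = inner (grad (u + t *\<^sub>R d) - grad u) d"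
      by (metis inner_commute inner_diff_right)
    also have "\<dots> \<le> norm (grad (u + t *\<^sub>R d) - grad u) * norm d" by (rule norm_cauchy_schwarz)
    also have "\<dots> \<le> L * norm (t *\<^sub>R d) * norm d"
      using lip[of "u + t *\<^sub>R d" u] by (intro mult_right_mono) auto
    also have "\<dots> = L * t * (norm d)\<^sup>2" using t by (simp add: power2_eq_square)
    finally show "\<exists>y. (k has_real_derivative y) (at t) \<and> y \<le> 0"
      using k_deriv[of t] by auto
  qed simp
  then show ?thesis by (simp add: k_def d_def algebra_simps inner_commute)
qed

lemma mult_le_weighted_sum_squares:
  fixes a b c :: real
  assumes "c > 0"
  shows "a * b \<le> c / 2 * a\<^sup>2 + b\<^sup>2 / (2 * c)"
proof -
  have "0 \<le> (c * a - b)\<^sup>2" by simp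
  then have "2 * c * (a * b) \<le> c\<^sup>2 * a\<^sup>2 + b\<^sup>2" by (simp add: power2_eq_square algebra_simps)
  then have "a * b \<le> (c\<^sup>2 * a\<^sup>2 + b\<^sup>2) / (2 * c)" using assms by (simp add: field_simps)
  also have "\<dots> = c / 2 * a\<^sup>2 + b\<^sup>2 / (2 * c)" using assms by (simp add: field_simps power2_eq_square)
  finally show ?thesis .
qed

lemma perturbed_gradient_step_decrease:
  fixes phi :: "'a::real_inner \<Rightarrow> real"
  assumes grad: "\<And>u. GDERIV phi u :> grad u"
    and lip: "\<And>u v. norm (grad u - grad v) \<le> L * norm (u - v)"
    and "\<gamma> > 0" "L > 0" "\<gamma> * L < 2"
  obtains c K where "c > 0" "K > 0"
    "\<And>x e. phi (x - \<gamma> *\<^sub>R (grad x + e)) \<le> phi x - c * (norm (grad x))\<^sup>2 + K * (norm e)\<^sup>2"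
proof -
  define c where "c = \<gamma> * (1 - L * \<gamma> / 2)"
  define a where "a = \<gamma> * (1 - L * \<gamma>)"
  have c_pos: "c > 0" using assms(3,5) by (simp add: c_def mult.commute)
  have decrease: "phi (x - \<gamma> *\<^sub>R (grad x + e)) \<le> phi x - c / 2 * (norm (grad x))\<^sup>2
      + (a\<^sup>2 / (2 * c) + L * \<gamma>\<^sup>2 / 2) * (norm e)\<^sup>2" for x e
  proof -
    define g where "g = grad x"
    have "phi (x - \<gamma> *\<^sub>R (g + e)) \<le> phi x + inner g (- (\<gamma> *\<^sub>R (g + e))) + L / 2 * (norm (\<gamma> *\<^sub>R (g + e)))\<^sup>2"
      using lipschitz_gradient_quadratic_bound[OF grad lip, of "x - \<gamma> *\<^sub>R (g + e)" x] by (simp add: g_def)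
    also have "\<dots> = phi x - c * (norm g)\<^sup>2 - a * inner g e + L * \<gamma>\<^sup>2 / 2 * (norm e)\<^sup>2"
      unfolding c_def a_def power2_norm_eq_inner
      by (simp add: inner_add_left inner_add_right inner_commute algebra_simps power2_eq_square)
    finally have quadratic: "phi (x - \<gamma> *\<^sub>R (g + e))
        \<le> phi x - c * (norm g)\<^sup>2 - a * inner g e + L * \<gamma>\<^sup>2 / 2 * (norm e)\<^sup>2" .
    have "- a * inner g e \<le> \<bar>a\<bar> * \<bar>inner g e\<bar>" by (simp add: abs_mult[symmetric])
    also have "\<dots> \<le> norm g * (\<bar>a\<bar> * norm e)"
      using Cauchy_Schwarz_ineq2[of g e] by (simp add: mult_left_mono algebra_simps)
    also have "\<dots> \<le> c / 2 * (norm g)\<^sup>2 + a\<^sup>2 / (2 * c) * (norm e)\<^sup>2"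
      using mult_le_weighted_sum_squares[OF c_pos, of "norm g" "\<bar>a\<bar> * norm e"]
      by (simp add: power_mult_distrib)
    finally show ?thesis using quadratic by (simp add: g_def algebra_simps)
  qed
  show thesis
  proof (rule that)
    show "c / 2 > 0" using c_pos by simp
    show "a\<^sup>2 / (2 * c) + L * \<gamma>\<^sup>2 / 2 > 0" using c_pos assms(3,4) by (intro add_nonneg_pos) auto
  qed (rule decrease)
qed

theorem proposition2:
  fixes phi :: "real^'n \<Rightarrow> real" and grad :: "real^'n \<Rightarrow> real^'n"
    and L \<gamma> :: real and ustar :: "real^'n"
  assumes "assumption_A phi grad L ustar"
    and "0 < \<gamma> * L" and "\<gamma> * L < 2"
  shows "ISS_discrete (\<lambda>u e. u - \<gamma> *\<^sub>R (grad u + e)) {ustar}"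
proof -
  from assms(1) obtain \<mu>1 \<mu>2 where gderiv: "\<And>u. GDERIV phi u :> grad u" and "L > 0"
    and grad_ustar: "grad ustar = 0" and \<mu>1: "class_Kinf \<mu>1" and \<mu>2: "class_Kinf \<mu>2"
    and lower: "\<And>u. \<mu>1 (norm (u - ustar)) \<le> phi u - phi ustar"
    and grad_lower: "\<And>u. \<mu>2 (phi u - phi ustar) \<le> norm (grad u)"
    and lip: "\<And>u v. norm (grad u - grad v) \<le> L * norm (u - v)"
    unfolding assumption_A_def by blast
  have "\<gamma> > 0" using assms(2) \<open>L > 0\<close> by (simp add: zero_less_mult_iff)
  then obtain c K where "c > 0" "K > 0" and decrease:
    "\<And>x e. phi (x - \<gamma> *\<^sub>R (grad x + e)) \<le> phi x - c * (norm (grad x))\<^sup>2 + K * (norm e)\<^sup>2"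
    using perturbed_gradient_step_decrease[OF gderiv lip _ \<open>L > 0\<close> assms(3)] by metis
  show ?thesis
  proof (rule ISS_discrete_if_Lyapunov[where V = "\<lambda>u. phi u - phi ustar"])
    show "class_Kinf \<mu>1" by (fact \<mu>1)
    show "class_K (\<lambda>s. L / 2 * s\<^sup>2)"
      using class_Kinf_scale[OF class_Kinf_power2, of "L / 2"] \<open>L > 0\<close> by (simp add: class_Kinf_def)
    show "class_Kinf (\<lambda>v. c * (\<mu>2 v)\<^sup>2)"
      by (rule class_Kinf_scale[OF class_Kinf_comp[OF class_Kinf_power2 \<mu>2] \<open>c > 0\<close>])
    show "class_Kinf (\<lambda>w. K * w\<^sup>2)" by (rule class_Kinf_scale[OF class_Kinf_power2 \<open>K > 0\<close>])
    show "\<mu>1 (infdist u {ustar}) \<le> phi u - phi ustar" for u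
      using lower by (simp add: dist_norm)
    show "phi u - phi ustar \<le> L / 2 * (infdist u {ustar})\<^sup>2" for u
      using lipschitz_gradient_quadratic_bound[OF gderiv lip, of u ustar] grad_ustar by (simp add: dist_norm)
    show "phi (x - \<gamma> *\<^sub>R (grad x + e)) - phi ustar
        \<le> phi x - phi ustar - c * (\<mu>2 (phi x - phi ustar))\<^sup>2 + K * (norm e)\<^sup>2" for x e
    proof -
      have "0 \<le> \<mu>1 (norm (x - ustar))"
        using \<mu>1 by (simp add: class_Kinf_def class_K_nonneg)
      then have "0 \<le> \<mu>2 (phi x - phi ustar)"
        using \<mu>2 lower[of x] by (simp add: class_Kinf_def class_K_nonneg)
      then have "(\<mu>2 (phi x - phi ustar))\<^sup>2 \<le> (norm (grad x))\<^sup>2"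
        by (rule power_mono[OF grad_lower])
      then show ?thesis using decrease[of x e] \<open>c > 0\<close> by (smt (verit) mult_left_mono)
    qed
  qed
qed

end
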